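(* Let $k\ge 1$ and let $A_1,\dots,A_{2k-1}$ be balanced parenthesis sequences inducing ordered matchings $M_1,\dots,M_{2k-1}$ respectively. Define $B_k=(A_k)$ and, for $j=k-1,\dots,1$, $B_j=(A_j\,B_{j+1}\,A_{2k-j})$, so that $B_1=(A_1(A_2(\cdots(A_{k-1}(A_k)A_{k+1})\cdots)A_{2k-2})A_{2k-1})$, and let $M$ be the parenthesis matching induced by $B_1$. Let $l=\sum_{i\ne k} r_<(M_i,K_3)$ and $t=r_<(M_k,K_3)$, and let $|M_k|$ denote the number of vertices of $M_k$. Then $$r_<(M,K_3)\le t+20\big(k+l+|M_k|\big).$$
   Context: An ordered graph on $[N]$ is a graph with vertex set $\{1,\dots,N\}$ equipped with the natural order. Given a red/blue coloring of the edges of the complete graph on $[N]$, a red (ordered) copy of an ordered graph $G$ on $[p]$ is a strictly increasing map $\varphi:[p]\to[N]$ such that $\varphi(u)\varphi(v)$ is red for every edge $uv$ of $G$. The ordered Ramsey number $r_<(G,K_3)$ is the smallest $N$ such that every red/blue coloring of the edges of the complete graph on $[N]$ contains either a red ordered copy of $G$ or a blue triangle. A balanced parenthesis sequence of length $2m$ is a correctly matched string of $m$ open and $m$ close parentheses (possibly empty); it induces the ordered matching on $[2m]$ whose edges are the pairs $\{i,j\}$ such that the parenthesis at position $i$ is an open parenthesis matched with the close parenthesis at position $j$. *)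

theory Defs
  imports Main
begin

text \<open>Parenthesis sequences are lists of booleans: True = open, False = close.
  Positions are 1-indexed: position i of xs is xs ! (i - 1).\<close>

inductive balanced :: "bool list \<Rightarrow> bool" where
  bal_Nil: "balanced []"
| bal_step: "balanced A \<Longrightarrow> balanced B \<Longrightarrow> balanced (True # A @ False # B)"

text \<open>The ordered matching induced by a parenthesis sequence: i < j is an edge iff
  position i is an open parenthesis matched with the close parenthesis at position j
  (equivalently, the sequence strictly between them is balanced).\<close>
definition paren_edge :: "bool list \<Rightarrow> nat \<Rightarrow> nat \<Rightarrow> bool" where
  "paren_edge xs i j \<longleftrightarrow> 1 \<le> i \<and> i < j \<and> j \<le> length xs \<and>
     xs ! (i - 1) \<and> \<not> xs ! (j - 1) \<and> balanced (take (j - i - 1) (drop i xs))"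

text \<open>Red ordered copy of the ordered graph on [p] with edge relation E (E u v for u < v),
  in the colouring red of pairs of [N] (red a b read only for a < b).\<close>
definition red_copy :: "nat \<Rightarrow> (nat \<Rightarrow> nat \<Rightarrow> bool) \<Rightarrow> nat \<Rightarrow> (nat \<Rightarrow> nat \<Rightarrow> bool) \<Rightarrow> bool" where
  "red_copy p E N red \<longleftrightarrow> (\<exists>\<phi>. strict_mono_on {1..p} \<phi> \<and> \<phi> ` {1..p} \<subseteq> {1..N} \<and>
     (\<forall>u v. 1 \<le> u \<and> u < v \<and> v \<le> p \<and> E u v \<longrightarrow> red (\<phi> u) (\<phi> v)))"

definition blue_triangle :: "nat \<Rightarrow> (nat \<Rightarrow> nat \<Rightarrow> bool) \<Rightarrow> bool" where
  "blue_triangle N red \<longleftrightarrow> (\<exists>a b c. 1 \<le> a \<and> a < b \<and> b < c \<and> c \<le> N \<and>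
     \<not> red a b \<and> \<not> red a c \<and> \<not> red b c)"

definition ord_ramsey_K3 :: "nat \<Rightarrow> (nat \<Rightarrow> nat \<Rightarrow> bool) \<Rightarrow> nat" where
  "ord_ramsey_K3 p E = (LEAST N. \<forall>red. red_copy p E N red \<or> blue_triangle N red)"

definition paren_ramsey :: "bool list \<Rightarrow> nat" where
  "paren_ramsey xs = ord_ramsey_K3 (length xs) (paren_edge xs)"

text \<open>nest A k d = B_{k-d}: nest A k 0 = (A_k),
  nest A k (d+1) = (A_{k-d-1} nest A k d A_{k+d+1}).\<close>
fun nest :: "(nat \<Rightarrow> bool list) \<Rightarrow> nat \<Rightarrow> nat \<Rightarrow> bool list" where
  "nest A k 0 = True # A k @ [False]"
| "nest A k (Suc d) = True # A (k - Suc d) @ nest A k d @ A (k + Suc d) @ [False]"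

end

theory Submission
  imports Defs "HOL-Library.Ramsey" "HOL-Library.FuncSet"
begin

(* Let b = |B_1| and m = b + 2(k + l), and colour the pairs of [2m + t] without a blue triangle.
  Put L = [1, m] and let R be the last m vertices, so that t vertices separate L from R.
  If some x in L has b blue neighbours in R, they are pairwise red and carry a red copy of M.
  Otherwise every x in L has more than 2(k + l) red neighbours in R. The sums x + y take only
  2m - 1 values, so more than k + l red edges xy lie on one antidiagonal x + y = s; such edges
  are pairwise nested. Greedily choose k of them, x_1 < ... < x_k and y_1 > ... > y_k, leaving
  r_<(M_j) + r_<(M_{2k-j}) vertices free after x_j and after y_(j+1). By the Ramsey property of
  the pieces, M_j embeds right after x_j, M_{2k-j} right after y_(j+1) and M_k between L and R,
  while the edge x_j y_j is the outer edge of B_j. *)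

section \<open>Heights and edges of parenthesis sequences\<close>

fun height :: "bool list \<Rightarrow> int" where
  "height [] = 0"
| "height (x # xs) = (if x then 1 else -1) + height xs"

lemma height_append [simp]: "height (xs @ ys) = height xs + height ys"
  by (induction xs) auto

lemma balanced_heightD: "balanced xs \<Longrightarrow> height xs = 0 \<and> (\<forall>n. 0 \<le> height (take n xs))"
proof (induction rule: balanced.induct)
  case bal_Nil
  then show ?case by simp
next
  case (bal_step A B)
  have "0 \<le> height (take n (True # A @ False # B))" for n
    using bal_step.IH
    by (cases n) (auto simp: take_append take_Cons' split: nat.split)
  then show ?case using bal_step.IH by simp
qed

lemma height_drop_open_neg:
  assumes "balanced xs" "i < length xs" "xs ! i"
  shows "height (drop (Suc i) xs) < 0"
proof -
  have "height xs = height (take i xs) + 1 + height (drop (Suc i) xs)"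
    using assms(2,3) by (subst id_take_nth_drop[OF assms(2)]) simp
  moreover have "0 \<le> height (take i xs)" "height xs = 0"
    using balanced_heightD[OF assms(1)] by auto
  ultimately show ?thesis by linarith
qed

lemma height_take_close_pos:
  assumes "balanced xs" "i < length xs" "\<not> xs ! i"
  shows "0 < height (take i xs)"
proof -
  have "height (take (Suc i) xs) = height (take i xs) - 1"
    using assms(2,3) by (simp add: take_Suc_conv_app_nth)
  then show ?thesis using balanced_heightD[OF assms(1)] by (metis zle_diff1_eq)
qed

lemma balanced_append: "balanced xs \<Longrightarrow> balanced ys \<Longrightarrow> balanced (xs @ ys)"
  by (induction rule: balanced.induct) (auto intro: balanced.intros)

lemma balanced_wrap: "balanced xs \<Longrightarrow> balanced (True # xs @ [False])"
  using bal_step[OF _ bal_Nil] by simp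

lemma paren_edge_append_left:
  "j \<le> length xs \<Longrightarrow> paren_edge (xs @ ys) i j \<longleftrightarrow> paren_edge xs i j"
  by (auto simp: paren_edge_def nth_append)

lemma paren_edge_append_right:
  "length xs < i \<Longrightarrow>
    paren_edge (xs @ ys) i j \<longleftrightarrow> paren_edge ys (i - length xs) (j - length xs)"
  by (auto simp: paren_edge_def nth_append)

lemma paren_edge_append_cases:
  assumes "balanced xs" "paren_edge (xs @ ys) i j"
  shows "(j \<le> length xs \<and> paren_edge xs i j) \<or>
    (length xs < i \<and> paren_edge ys (i - length xs) (j - length xs))"
proof -
  have "\<not> (i \<le> length xs \<and> length xs < j)"
  proof
    assume crossing: "i \<le> length xs \<and> length xs < j"
    let ?between = "take (j - i - 1) (drop i (xs @ ys))"
    have "balanced ?between" "1 \<le> i" "xs ! (i - 1)"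
      using assms(2) crossing by (auto simp: paren_edge_def nth_append)
    have "length xs - i \<le> j - i - 1" using crossing by linarith
    then have "take (length xs - i) ?between = drop i xs"
      by (simp add: min_absorb1)
    then have "0 \<le> height (drop i xs)"
      using balanced_heightD[OF \<open>balanced ?between\<close>] by metis
    moreover have "i - 1 < length xs" using crossing \<open>1 \<le> i\<close> by linarith
    then have "height (drop i xs) < 0"
      using height_drop_open_neg[OF assms(1)] \<open>1 \<le> i\<close> \<open>xs ! (i - 1)\<close> by fastforce
    ultimately show False by simp
  qed
  then show ?thesis
    using assms(2) paren_edge_append_left paren_edge_append_right by (metis not_le)
qed

lemma paren_edge_wrap_cases:
  assumes "balanced xs" "paren_edge (True # xs @ [False]) i j"
  shows "(i = 1 \<and> j = length xs + 2) \<or>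
    (2 \<le> i \<and> j \<le> length xs + 1 \<and> paren_edge xs (i - 1) (j - 1))"
proof (cases "i = 1")
  case True
  show ?thesis
  proof (rule ccontr)
    assume "\<not> ?thesis"
    then have j: "2 \<le> j" "j - 2 < length xs"
      using True assms(2) by (auto simp: paren_edge_def)
    have "balanced (take (j - 2) xs)" "\<not> xs ! (j - 2)"
      using assms(2) True j by (auto simp: paren_edge_def nth_append numeral_2_eq_2 take_Cons')
    then show False
      using height_take_close_pos[OF assms(1) j(2)] balanced_heightD by fastforce
  qed
next
  case False
  then have "2 \<le> i" using assms(2) by (auto simp: paren_edge_def)
  have "paren_edge ([True] @ xs @ [False]) i j" using assms(2) by simp
  then have "paren_edge (xs @ [False]) (i - 1) (j - 1)"
    using paren_edge_append_right[of "[True]"] \<open>2 \<le> i\<close> by simp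
  moreover have "\<not> paren_edge [False] i' j'" for i' j'
    by (auto simp: paren_edge_def)
  ultimately show ?thesis
    using paren_edge_append_cases[OF assms(1)] \<open>2 \<le> i\<close> by fastforce
qed

section \<open>Red copies and the ordered Ramsey number\<close>

definition red_copy_between ::
    "nat \<Rightarrow> (nat \<Rightarrow> nat \<Rightarrow> bool) \<Rightarrow> nat \<Rightarrow> nat \<Rightarrow> (nat \<Rightarrow> nat \<Rightarrow> bool) \<Rightarrow> bool" where
  "red_copy_between p E a b red \<longleftrightarrow> (\<exists>\<phi>. strict_mono_on {1..p} \<phi> \<and> \<phi> ` {1..p} \<subseteq> {a..b} \<and>
     (\<forall>u v. 1 \<le> u \<and> u < v \<and> v \<le> p \<and> E u v \<longrightarrow> red (\<phi> u) (\<phi> v)))"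

lemma red_copy_iff_between: "red_copy p E N red \<longleftrightarrow> red_copy_between p E 1 N red"
  unfolding red_copy_def red_copy_between_def ..

lemma red_copy_between_mono:
  assumes "red_copy_between p E a b red" "a' \<le> a" "b \<le> b'"
  shows "red_copy_between p E a' b' red"
proof -
  have "{a..b} \<subseteq> {a'..b'}" using assms(2,3) by auto
  then show ?thesis using assms(1) unfolding red_copy_between_def by (meson order_trans)
qed

lemma red_copy_between_clique:
  assumes "finite K" "K \<subseteq> {a..b}" "p \<le> card K" "\<forall>x\<in>K. \<forall>y\<in>K. x < y \<longrightarrow> red x y"
  shows "red_copy_between p E a b red"
proof -
  define \<phi> where "\<phi> i = sorted_list_of_set K ! (i - 1)" for i
  have "\<phi> r < \<phi> s" if "r \<in> {1..p}" "s \<in> {1..p}" "r < s" for r s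
    unfolding \<phi>_def using that assms(1,3)
    by (intro sorted_wrt_nth_less[OF strict_sorted_list_of_set]) auto
  then have mono: "strict_mono_on {1..p} \<phi>"
    by (intro strict_mono_onI)
  have in_K: "\<phi> i \<in> K" if "i \<in> {1..p}" for i
    using that assms(1,3) nth_mem[of "i - 1" "sorted_list_of_set K"] by (auto simp: \<phi>_def)
  have "red (\<phi> u) (\<phi> v)" if "1 \<le> u" "u < v" "v \<le> p" for u v
    using assms(4) in_K[of u] in_K[of v] strict_mono_onD[OF mono, of u v] that by auto
  then show ?thesis
    using mono in_K assms(2) unfolding red_copy_between_def by blast
qed

lemma card_3_obtain_less:
  fixes R :: "'a :: linorder set"
  assumes "card R = 3"
  obtains a b c where "R = {a, b, c}" "a < b" "b < c"
proof -
  define xs where "xs = sorted_list_of_set R"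
  have "finite R" using assms by (simp add: card_ge_0_finite)
  have "length xs = 3" using assms by (simp add: xs_def)
  then obtain a b c where "xs = [a, b, c]"
    by (auto simp: numeral_3_eq_3 length_Suc_conv)
  moreover have "sorted_wrt (<) xs" "set xs = R"
    using \<open>finite R\<close> by (simp_all add: xs_def)
  ultimately show ?thesis using that by auto
qed

definition ramsey_K3_property :: "nat \<Rightarrow> (nat \<Rightarrow> nat \<Rightarrow> bool) \<Rightarrow> nat \<Rightarrow> bool" where
  "ramsey_K3_property p E N \<longleftrightarrow> (\<forall>red. red_copy p E N red \<or> blue_triangle N red)"

lemma ramsey_K3_property_exists: "\<exists>N. ramsey_K3_property p E N"
proof -
  obtain r where r: "\<forall>(V :: nat set) F. finite V \<and> card V \<ge> r \<longrightarrow>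
      (\<exists>R\<subseteq>V. card R = p \<and> clique R F \<or> card R = 3 \<and> indep R F)"
    using ramsey2[of p 3] by auto
  have "red_copy p E r red \<or> blue_triangle r red" for red
  proof -
    let ?F = "{{a, b} | a b. a < b \<and> red a b}"
    have red_iff: "{a, b} \<in> ?F \<longleftrightarrow> red a b" if "a < b" for a b
      using that by (auto simp: doubleton_eq_iff)
    obtain R where R: "R \<subseteq> {1..r}" "card R = p \<and> clique R ?F \<or> card R = 3 \<and> indep R ?F"
      using r[rule_format, of "{1..r}" ?F] by auto
    then have "finite R" using finite_subset by blast
    from R(2) show ?thesis
    proof
      assume clique: "card R = p \<and> clique R ?F"
      have "red x y" if "x \<in> R" "y \<in> R" "x < y" for x y
        using clique that red_iff[of x y] unfolding clique_def by auto
      then have "red_copy_between p E 1 r red"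
        using R(1) \<open>finite R\<close> clique by (intro red_copy_between_clique[of R]) auto
      then show ?thesis by (simp add: red_copy_iff_between)
    next
      assume indep: "card R = 3 \<and> indep R ?F"
      then obtain a b c where "R = {a, b, c}" "a < b" "b < c"
        using card_3_obtain_less by blast
      moreover have "\<not> red x y" if "x \<in> R" "y \<in> R" "x < y" for x y
        using indep that red_iff[of x y] unfolding indep_def by auto
      ultimately have "blue_triangle r red"
        using R(1) unfolding blue_triangle_def
        by (intro exI[of _ a] exI[of _ b] exI[of _ c]) auto
      then show ?thesis ..
    qed
  qed
  then show ?thesis unfolding ramsey_K3_property_def by blast
qed

lemma ramsey_K3_property_ord_ramsey_K3: "ramsey_K3_property p E (ord_ramsey_K3 p E)"
  using ramsey_K3_property_exists unfolding ord_ramsey_K3_def ramsey_K3_property_def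
  by (rule LeastI_ex)

lemma ord_ramsey_K3_le: "ramsey_K3_property p E N \<Longrightarrow> ord_ramsey_K3 p E \<le> N"
  unfolding ord_ramsey_K3_def ramsey_K3_property_def by (rule Least_le)

lemma ord_ramsey_K3_ge: "p \<le> ord_ramsey_K3 p E"
proof -
  let ?n = "ord_ramsey_K3 p E"
  have "red_copy p E ?n (\<lambda>_ _. True)"
    using ramsey_K3_property_ord_ramsey_K3 unfolding ramsey_K3_property_def blue_triangle_def
    by blast
  then obtain \<phi> where "strict_mono_on {1..p} \<phi>" "\<phi> ` {1..p} \<subseteq> {1..?n}"
    unfolding red_copy_def by blast
  then have "card {1..p} \<le> card {1..?n}"
    by (intro card_inj_on_le[of \<phi>]) (auto intro: strict_mono_on_imp_inj_on)
  then show ?thesis by simp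
qed

lemma red_copy_between_translate:
  assumes "ramsey_K3_property p E n" "\<not> blue_triangle N red" "s + n \<le> N"
  shows "red_copy_between p E (Suc s) (s + n) red"
proof -
  let ?red = "\<lambda>u v. red (u + s) (v + s)"
  have "\<not> blue_triangle n ?red"
  proof
    assume "blue_triangle n ?red"
    then obtain a b c where "1 \<le> a" "a < b" "b < c" "c \<le> n"
      "\<not> ?red a b" "\<not> ?red a c" "\<not> ?red b c" unfolding blue_triangle_def by blast
    then have "blue_triangle N red"
      using assms(3) unfolding blue_triangle_def
      by (intro exI[of _ "a + s"] exI[of _ "b + s"] exI[of _ "c + s"]) auto
    with assms(2) show False ..
  qed
  with assms(1) have "red_copy p E n ?red"
    unfolding ramsey_K3_property_def by blast
  then obtain \<phi> where \<phi>: "strict_mono_on {1..p} \<phi>" "\<phi> ` {1..p} \<subseteq> {1..n}"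
    "\<forall>u v. 1 \<le> u \<and> u < v \<and> v \<le> p \<and> E u v \<longrightarrow> ?red (\<phi> u) (\<phi> v)"
    unfolding red_copy_def by blast
  have "strict_mono_on {1..p} (\<lambda>i. \<phi> i + s)"
    using \<phi>(1) by (auto simp: strict_mono_on_def)
  moreover have "(\<lambda>i. \<phi> i + s) ` {1..p} \<subseteq> {Suc s..s + n}"
    using \<phi>(2) by force
  ultimately show ?thesis
    unfolding red_copy_between_def using \<phi>(3) by (intro exI[of _ "\<lambda>i. \<phi> i + s"]) simp
qed

lemma red_copy_blue_neighbours:
  assumes "\<not> blue_triangle N red" "1 \<le> x" "Y \<subseteq> {x<..N}" "\<forall>y\<in>Y. \<not> red x y" "p \<le> card Y"
  shows "red_copy p E N red"
proof -
  have "red y z" if "y \<in> Y" "z \<in> Y" "y < z" for y z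
  proof (rule ccontr)
    assume "\<not> red y z"
    then have "blue_triangle N red"
      using that assms(2-4) unfolding blue_triangle_def
      by (intro exI[of _ x] exI[of _ y] exI[of _ z]) auto
    with assms(1) show False ..
  qed
  then have "red_copy_between p E 1 N red"
    using assms(2,3,5) finite_subset[OF assms(3)]
    by (intro red_copy_between_clique[of Y]) auto
  then show ?thesis by (simp add: red_copy_iff_between)
qed

section \<open>Gluing red copies of parenthesis matchings\<close>

lemma strict_mono_on_join:
  fixes f g :: "nat \<Rightarrow> nat"
  assumes "strict_mono_on {1..m} f" "strict_mono_on {1..n} g"
    and "\<forall>i\<in>{1..m}. \<forall>j\<in>{1..n}. f i < g j"
  shows "strict_mono_on {1..m + n} (\<lambda>i. if i \<le> m then f i else g (i - m))"
proof (rule strict_mono_onI)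
  fix r s assume rs: "r \<in> {1..m + n}" "s \<in> {1..m + n}" "r < s"
  consider "s \<le> m" | "r \<le> m" "m < s" | "m < r" by linarith
  then show "(if r \<le> m then f r else g (r - m)) < (if s \<le> m then f s else g (s - m))"
  proof cases
    case 1
    then show ?thesis using strict_mono_onD[OF assms(1)] rs by simp
  next
    case 2
    then have "r \<in> {1..m}" "s - m \<in> {1..n}" using rs by auto
    then show ?thesis using 2 assms(3) by simp
  next
    case 3
    then show ?thesis using strict_mono_onD[OF assms(2), of "r - m" "s - m"] rs by simp
  qed
qed

lemma red_copy_between_append:
  \<comment> \<open>\<open>a \<le> c'\<close> and \<open>c \<le> d\<close> rather than \<open>a \<le> c\<close> and \<open>c' \<le> d\<close>, as either list may be empty\<close>
  assumes "balanced xs"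
    and "red_copy_between (length xs) (paren_edge xs) a c red"
    and "red_copy_between (length ys) (paren_edge ys) c' d red"
    and "c < c'" "a \<le> c'" "c \<le> d"
  shows "red_copy_between (length (xs @ ys)) (paren_edge (xs @ ys)) a d red"
proof -
  obtain f where f: "strict_mono_on {1..length xs} f" "f ` {1..length xs} \<subseteq> {a..c}"
    "\<forall>u v. 1 \<le> u \<and> u < v \<and> v \<le> length xs \<and> paren_edge xs u v \<longrightarrow> red (f u) (f v)"
    using assms(2) unfolding red_copy_between_def by blast
  obtain g where g: "strict_mono_on {1..length ys} g" "g ` {1..length ys} \<subseteq> {c'..d}"
    "\<forall>u v. 1 \<le> u \<and> u < v \<and> v \<le> length ys \<and> paren_edge ys u v \<longrightarrow> red (g u) (g v)"
    using assms(3) unfolding red_copy_between_def by blast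
  define h where "h = (\<lambda>i. if i \<le> length xs then f i else g (i - length xs))"
  have "\<forall>i\<in>{1..length xs}. \<forall>j\<in>{1..length ys}. f i < g j"
    using f(2) g(2) assms(4) by (fastforce simp: image_subset_iff)
  then have "strict_mono_on {1..length (xs @ ys)} h"
    using strict_mono_on_join[OF f(1) g(1)] by (simp add: h_def)
  moreover have "h i \<in> {a..d}" if "i \<in> {1..length (xs @ ys)}" for i
  proof (cases "i \<le> length xs")
    case True
    then have "i \<in> {1..length xs}" using that by simp
    then have "f i \<in> {a..c}" using f(2) by blast
    then show ?thesis using True assms(6) by (simp add: h_def)
  next
    case False
    then have "i - length xs \<in> {1..length ys}" using that by auto
    then have "g (i - length xs) \<in> {c'..d}" using g(2) by blast
    then show ?thesis using False assms(5) by (simp add: h_def)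
  qed
  moreover have "red (h u) (h v)"
    if "1 \<le> u" "u < v" "v \<le> length (xs @ ys)" "paren_edge (xs @ ys) u v" for u v
    using paren_edge_append_cases[OF assms(1) that(4)]
  proof
    assume "v \<le> length xs \<and> paren_edge xs u v"
    then show ?thesis using f(3) that by (simp add: h_def)
  next
    assume ys: "length xs < u \<and> paren_edge ys (u - length xs) (v - length xs)"
    then have "1 \<le> u - length xs" "u - length xs < v - length xs" "v - length xs \<le> length ys"
      using that by auto
    then show ?thesis using ys g(3) that(2) by (simp add: h_def)
  qed
  ultimately show ?thesis unfolding red_copy_between_def by blast
qed

lemma strict_mono_on_wrap:
  fixes f :: "nat \<Rightarrow> nat"
  assumes "strict_mono_on {1..n} f" "\<forall>i\<in>{1..n}. a < f i \<and> f i < b" "a < b"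
  shows "strict_mono_on {1..n + 2} (\<lambda>i. if i = 1 then a else if i \<le> n + 1 then f (i - 1) else b)"
proof (rule strict_mono_onI)
  fix r s assume rs: "r \<in> {1..n + 2}" "s \<in> {1..n + 2}" "r < s"
  consider "r = 1" "s = n + 2" | "r = 1" "s \<le> n + 1" | "r \<noteq> 1" "s = n + 2" | "r \<noteq> 1" "s \<le> n + 1"
    using rs by (cases "r = 1"; cases "s = n + 2") auto
  then show "(if r = 1 then a else if r \<le> n + 1 then f (r - 1) else b)
      < (if s = 1 then a else if s \<le> n + 1 then f (s - 1) else b)"
  proof cases
    case 1
    then show ?thesis using assms(3) by simp
  next
    case 2
    then have "s - 1 \<in> {1..n}" using rs by auto
    then show ?thesis using 2 rs(3) assms(2) by simp
  next
    case 3
    then have "r - 1 \<in> {1..n}" using rs by auto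
    then show ?thesis using 3 rs(3) assms(2) by simp
  next
    case 4
    then show ?thesis using rs strict_mono_onD[OF assms(1), of "r - 1" "s - 1"] by simp
  qed
qed

lemma red_copy_between_wrap:
  assumes "balanced xs" "red_copy_between (length xs) (paren_edge xs) a' b' red"
    and "a < a'" "b' < b" "a < b" "red a b"
  shows "red_copy_between (length (True # xs @ [False])) (paren_edge (True # xs @ [False])) a b red"
proof -
  obtain f where f: "strict_mono_on {1..length xs} f" "f ` {1..length xs} \<subseteq> {a'..b'}"
    "\<forall>u v. 1 \<le> u \<and> u < v \<and> v \<le> length xs \<and> paren_edge xs u v \<longrightarrow> red (f u) (f v)"
    using assms(2) unfolding red_copy_between_def by blast
  define h where "h = (\<lambda>i. if i = 1 then a else if i \<le> length xs + 1 then f (i - 1) else b)"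
  have inner: "\<forall>i\<in>{1..length xs}. a < f i \<and> f i < b"
    using f(2) assms(3,4) by force
  have "strict_mono_on {1..length (True # xs @ [False])} h"
    using strict_mono_on_wrap[OF f(1) inner assms(5)] by (simp add: h_def)
  moreover have "h i \<in> {a..b}" if "i \<in> {1..length (True # xs @ [False])}" for i
  proof (cases "i = 1 \<or> length xs + 1 < i")
    case True
    then show ?thesis using assms(5) by (auto simp: h_def)
  next
    case False
    then have "i - 1 \<in> {1..length xs}" using that by auto
    then have "a < f (i - 1)" "f (i - 1) < b" using inner by auto
    then show ?thesis using False by (simp add: h_def)
  qed
  moreover have "red (h u) (h v)" if "1 \<le> u" "u < v" "v \<le> length (True # xs @ [False])"
    "paren_edge (True # xs @ [False]) u v" for u v
    using paren_edge_wrap_cases[OF assms(1) that(4)]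
  proof
    assume "u = 1 \<and> v = length xs + 2"
    then show ?thesis using assms(6) by (simp add: h_def)
  next
    assume inner_edge: "2 \<le> u \<and> v \<le> length xs + 1 \<and> paren_edge xs (u - 1) (v - 1)"
    then have "1 \<le> u - 1" "u - 1 < v - 1" "v - 1 \<le> length xs" using that(2) by auto
    then have "red (f (u - 1)) (f (v - 1))" using inner_edge f(3) by blast
    moreover have "h u = f (u - 1)" "h v = f (v - 1)" using inner_edge that(2) by (auto simp: h_def)
    ultimately show ?thesis by simp
  qed
  ultimately show ?thesis unfolding red_copy_between_def by blast
qed

lemma card_filter_add_card_filter_not:
  "finite S \<Longrightarrow> card {y \<in> S. P y} + card {y \<in> S. \<not> P y} = card S"
  by (subst card_Un_disjoint[symmetric]) (auto intro: arg_cong[where f = card])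

lemma spaced_elements_exist:
  fixes X :: "nat set" and g :: "nat \<Rightarrow> nat"
  assumes "finite X" "1 + (\<Sum>j\<in>{i..<i + m}. g j) \<le> card X"
  shows "\<exists>x. (\<forall>j\<in>{i..i + m}. x j \<in> X) \<and> (\<forall>j\<in>{i..<i + m}. x j + g j \<le> x (Suc j))"
  using assms
proof (induction m arbitrary: i X)
  case 0
  then obtain a where "a \<in> X" by fastforce
  then show ?case by (intro exI[of _ "\<lambda>_. a"]) auto
next
  case (Suc m)
  define a where "a = Min X"
  have "X \<noteq> {}" using Suc.prems by auto
  then have a: "a \<in> X" "\<forall>y\<in>X. a \<le> y" using Suc.prems(1) by (auto simp: a_def)
  define X' where "X' = {y \<in> X. a + g i \<le> y}"
  have "finite X'" "X' \<subseteq> X" using Suc.prems(1) by (auto simp: X'_def)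
  have "X - X' \<subseteq> {a..<a + g i}" using a by (auto simp: X'_def)
  then have "card (X - X') \<le> card {a..<a + g i}" by (intro card_mono) auto
  then have "card (X - X') \<le> g i" by simp
  moreover have "card (X - X') = card X - card X'"
    using \<open>finite X'\<close> \<open>X' \<subseteq> X\<close> by (rule card_Diff_subset)
  moreover have "(\<Sum>j\<in>{i..<i + Suc m}. g j) = g i + (\<Sum>j\<in>{Suc i..<Suc i + m}. g j)"
    by (simp add: sum.atLeast_Suc_lessThan)
  ultimately have "1 + (\<Sum>j\<in>{Suc i..<Suc i + m}. g j) \<le> card X'"
    using Suc.prems(2) by linarith
  then obtain x where x: "\<forall>j\<in>{Suc i..Suc i + m}. x j \<in> X'"
    "\<forall>j\<in>{Suc i..<Suc i + m}. x j + g j \<le> x (Suc j)"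
    using Suc.IH[OF \<open>finite X'\<close>] by blast
  have "x (Suc i) \<in> X'" using x(1) by simp
  then have "\<forall>j\<in>{i..<i + Suc m}. (x(i := a)) j + g j \<le> (x(i := a)) (Suc j)"
    using x(2) by (auto simp: X'_def)
  moreover have "\<forall>j\<in>{i..i + Suc m}. (x(i := a)) j \<in> X"
    using x(1) a(1) \<open>X' \<subseteq> X\<close> by (auto simp: Suc_le_eq le_less)
  ultimately show ?case by blast
qed

lemma antidiagonal_pigeonhole:
  fixes R :: "nat \<Rightarrow> nat \<Rightarrow> bool"
  assumes "1 \<le> m" "\<forall>x\<in>{1..m}. 2 * G < card {y \<in> {c<..c + m}. R x y}"
  shows "\<exists>s. G < card {x \<in> {1..m}. \<exists>y\<in>{c<..c + m}. x + y = s \<and> R x y}"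
proof -
  define P where "P = (SIGMA x:{1..m}. {y \<in> {c<..c + m}. R x y})"
  define X where "X s = {x \<in> {1..m}. \<exists>y\<in>{c<..c + m}. x + y = s \<and> R x y}" for s
  have "(\<Sum>x\<in>{1..m}. 2 * G + 1) \<le> (\<Sum>x\<in>{1..m}. card {y \<in> {c<..c + m}. R x y})"
    using assms(2) by (intro sum_mono) (simp add: Suc_le_eq)
  then have "m * (2 * G + 1) \<le> (\<Sum>x\<in>{1..m}. card {y \<in> {c<..c + m}. R x y})" by simp
  also have "\<dots> = card P" unfolding P_def by (simp add: card_SigmaI)
  finally have P_large: "m * (2 * G + 1) \<le> card P" .
  let ?fibre = "\<lambda>s. (\<lambda>(x, y). x + y) -` {s} \<inter> P"
  have "(\<lambda>(x, y). x + y) \<in> P \<rightarrow> {c + 2..c + 2 * m}" unfolding P_def by auto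
  moreover have "finite P" unfolding P_def by simp
  moreover have "{c + 2..c + 2 * m} \<noteq> {}" using assms(1) by simp
  ultimately obtain s where s: "card P \<le> card (?fibre s) * card {c + 2..c + 2 * m}"
    using pigeonhole_card[of _ P] by blast
  have "inj_on fst (?fibre s)" by (auto simp: inj_on_def)
  moreover have "fst ` ?fibre s \<subseteq> X s" by (force simp: P_def X_def)
  ultimately have "card (?fibre s) \<le> card (X s)"
    by (intro card_inj_on_le) (auto simp: X_def)
  then have "card (?fibre s) * card {c + 2..c + 2 * m} \<le> card (X s) * (2 * m - 1)"
    by (intro mult_le_mono) auto
  with s P_large have "m * (2 * G + 1) \<le> card (X s) * (2 * m - 1)" by linarith
  moreover have "G * (2 * m - 1) < m * (2 * G + 1)" using assms(1) by (simp add: algebra_simps diff_mult_distrib2)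
  ultimately have "G * (2 * m - 1) < card (X s) * (2 * m - 1)" by linarith
  then show ?thesis unfolding X_def by (meson mult_less_cancel2)
qed

lemma sum_mirror_pairs_le:
  fixes n :: "nat \<Rightarrow> nat"
  shows "(\<Sum>j\<in>{1..<k}. n j + n (2 * k - j)) \<le> (\<Sum>i\<in>{1..2 * k - 1} - {k}. n i)"
proof -
  let ?mirror = "\<lambda>j. 2 * k - j"
  have "inj_on ?mirror {1..<k}" by (auto simp: inj_on_def)
  then have "(\<Sum>j\<in>{1..<k}. n (2 * k - j)) = (\<Sum>i\<in>?mirror ` {1..<k}. n i)"
    by (simp add: sum.reindex)
  moreover have "{1..<k} \<inter> ?mirror ` {1..<k} = {}" by auto
  ultimately have "(\<Sum>j\<in>{1..<k}. n j + n (2 * k - j)) = (\<Sum>i\<in>{1..<k} \<union> ?mirror ` {1..<k}. n i)"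
    by (simp add: sum.distrib sum.union_disjoint)
  also have "\<dots> \<le> (\<Sum>i\<in>{1..2 * k - 1} - {k}. n i)"
    by (rule sum_mono2) auto
  finally show ?thesis .
qed

section \<open>The nested sequence\<close>

lemma balanced_nest:
  assumes "\<forall>i\<in>{1..2 * k - 1}. balanced (A i)"
  shows "d < k \<Longrightarrow> balanced (nest A k d)"
proof (induction d)
  case 0
  then show ?case using assms balanced_wrap by simp
next
  case (Suc d)
  then have "k - Suc d \<in> {1..2 * k - 1}" "k + Suc d \<in> {1..2 * k - 1}" by auto
  then have "balanced (A (k - Suc d))" "balanced (A (k + Suc d))" using assms by blast+
  with Suc show ?case
    using balanced_wrap[OF balanced_append[OF _ balanced_append]] by simp
qed

lemma length_nest:
  "d < k \<Longrightarrow> length (nest A k d) = 2 * (d + 1) + (\<Sum>i\<in>{k - d..k + d}. length (A i))"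
proof (induction d)
  case 0
  then show ?case by simp
next
  case (Suc d)
  have "{k - Suc d..k + Suc d} = insert (k - Suc d) (insert (k + Suc d) {k - d..k + d})"
    using Suc.prems by auto
  moreover have "k - Suc d \<notin> insert (k + Suc d) {k - d..k + d}" "k + Suc d \<notin> {k - d..k + d}"
    using Suc.prems by auto
  ultimately have "(\<Sum>i\<in>{k - Suc d..k + Suc d}. length (A i)) =
      length (A (k - Suc d)) + length (A (k + Suc d)) + (\<Sum>i\<in>{k - d..k + d}. length (A i))"
    by simp
  then show ?case using Suc by simp
qed

lemma length_nest_outermost:
  assumes "1 \<le> k"
  shows "length (nest A k (k - 1)) = 2 * k + length (A k) + (\<Sum>i\<in>{1..2 * k - 1} - {k}. length (A i))"
proof -
  have "(\<Sum>i\<in>{1..2 * k - 1}. length (A i)) = length (A k) + (\<Sum>i\<in>{1..2 * k - 1} - {k}. length (A i))"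
    using assms by (intro sum.remove) auto
  moreover have "k - (k - 1) = 1" "k + (k - 1) = 2 * k - 1" using assms by auto
  ultimately show ?thesis using length_nest[of "k - 1" k A] assms by simp
qed

lemma red_copy_between_paren_block:
  assumes "\<not> blue_triangle N red" "s + paren_ramsey xs \<le> N"
  shows "red_copy_between (length xs) (paren_edge xs) (Suc s) (s + paren_ramsey xs) red"
  using red_copy_between_translate[OF ramsey_K3_property_ord_ramsey_K3] assms
  unfolding paren_ramsey_def .

lemma red_copy_between_nest:
  assumes bal: "\<forall>i\<in>{1..2 * k - 1}. balanced (A i)"
    and no_blue: "\<not> blue_triangle N red"
    and edges: "\<forall>j\<in>{1..k}. x j \<le> c \<and> c + paren_ramsey (A k) < y j \<and> y j \<le> N \<and> red (x j) (y j)"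
    and spacing: "\<forall>j\<in>{1..<k}. x j + paren_ramsey (A j) < x (Suc j) \<and>
      y (Suc j) + paren_ramsey (A (2 * k - j)) < y j"
  shows "d < k \<Longrightarrow>
    red_copy_between (length (nest A k d)) (paren_edge (nest A k d)) (x (k - d)) (y (k - d)) red"
proof (induction d)
  case 0
  then have "balanced (A k)" "x k \<le> c" "c + paren_ramsey (A k) < y k" "y k \<le> N" "red (x k) (y k)"
    using bal edges by auto
  moreover have "red_copy_between (length (A k)) (paren_edge (A k)) (Suc c) (c + paren_ramsey (A k)) red"
    using calculation by (intro red_copy_between_paren_block[OF no_blue]) simp
  ultimately show ?case using red_copy_between_wrap by simp
next
  case (Suc d)
  define j where "j = k - Suc d"
  have j: "1 \<le> j" "j < k" "Suc j = k - d" "k + Suc d = 2 * k - j"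
    using Suc.prems by (auto simp: j_def)
  let ?left = "A j" and ?right = "A (2 * k - j)" and ?inner = "nest A k d"
  have bal_parts: "balanced ?left" "balanced ?right" "balanced ?inner"
    using bal j balanced_nest[OF bal, of d] Suc.prems by auto
  have inner: "red_copy_between (length ?inner) (paren_edge ?inner) (x (Suc j)) (y (Suc j)) red"
    using Suc j by simp
  have xy: "x j \<le> c" "c < y (Suc j)" "y j \<le> N" "red (x j) (y j)" "x (Suc j) \<le> c"
    "x j + paren_ramsey ?left < x (Suc j)" "y (Suc j) + paren_ramsey ?right < y j"
    using edges[rule_format, of j] edges[rule_format, of "Suc j"] spacing[rule_format, of j] j(1,2)
    by auto
  have left: "red_copy_between (length ?left) (paren_edge ?left) (Suc (x j)) (x j + paren_ramsey ?left) red"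
    using xy by (intro red_copy_between_paren_block[OF no_blue]) simp
  have right: "red_copy_between (length ?right) (paren_edge ?right)
      (Suc (y (Suc j))) (y (Suc j) + paren_ramsey ?right) red"
    using xy by (intro red_copy_between_paren_block[OF no_blue]) simp
  have "red_copy_between (length (?inner @ ?right)) (paren_edge (?inner @ ?right))
      (x (Suc j)) (y (Suc j) + paren_ramsey ?right) red"
    by (rule red_copy_between_append[OF bal_parts(3) inner right]) (use xy in auto)
  then have "red_copy_between (length (?left @ ?inner @ ?right)) (paren_edge (?left @ ?inner @ ?right))
      (Suc (x j)) (y (Suc j) + paren_ramsey ?right) red"
    by (rule red_copy_between_append[OF bal_parts(1) left]) (use xy in auto)
  then have "red_copy_between (length (True # (?left @ ?inner @ ?right) @ [False]))
      (paren_edge (True # (?left @ ?inner @ ?right) @ [False])) (x j) (y j) red"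
    by (rule red_copy_between_wrap[OF balanced_append[OF bal_parts(1) balanced_append[OF bal_parts(3,2)]]])
      (use xy in auto)
  then show ?case using j by (simp add: j_def)
qed

lemma nested_red_edges_exist:
  fixes red :: "nat \<Rightarrow> nat \<Rightarrow> bool" and g :: "nat \<Rightarrow> nat"
  assumes "1 \<le> m" "\<forall>x\<in>{1..m}. 2 * G < card {y \<in> {c<..c + m}. red x y}"
    and "k + (\<Sum>j\<in>{1..<k}. g j) \<le> G"
  shows "\<exists>x y. (\<forall>j\<in>{1..k}. x j \<in> {1..m} \<and> y j \<in> {c<..c + m} \<and> red (x j) (y j)) \<and>
    (\<forall>j\<in>{1..<k}. x j + g j < x (Suc j) \<and> y (Suc j) + g j < y j)"
proof -
  obtain s where s: "G < card {x \<in> {1..m}. \<exists>y\<in>{c<..c + m}. x + y = s \<and> red x y}"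
    using antidiagonal_pigeonhole[OF assms(1,2)] by blast
  let ?X = "{x \<in> {1..m}. \<exists>y\<in>{c<..c + m}. x + y = s \<and> red x y}"
  have "(\<Sum>j\<in>{1..<k}. (g j + 1)) = (\<Sum>j\<in>{1..<k}. g j) + (k - 1)"
    by (subst sum.distrib) simp
  then have "1 + (\<Sum>j\<in>{1..<1 + (k - 1)}. (g j + 1)) \<le> card ?X"
    using s assms(3) by (cases k) auto
  moreover have "finite ?X" by simp
  ultimately obtain x where x: "\<forall>j\<in>{1..1 + (k - 1)}. x j \<in> ?X"
    "\<forall>j\<in>{1..<1 + (k - 1)}. x j + (g j + 1) \<le> x (Suc j)"
    using spaced_elements_exist[where g = "\<lambda>j. g j + 1"] by blast
  define y where "y j = s - x j" for j
  have on_antidiagonal: "x j \<in> {1..m} \<and> y j \<in> {c<..c + m} \<and> x j + y j = s \<and> red (x j) (y j)"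
    if "j \<in> {1..k}" for j
  proof -
    have "j \<in> {1..1 + (k - 1)}" using that by auto
    then obtain z where "x j \<in> {1..m}" "z \<in> {c<..c + m}" "x j + z = s" "red (x j) z"
      using x(1) by blast
    moreover from this have "y j = z" by (simp add: y_def)
    ultimately show ?thesis by simp
  qed
  have "x j + g j < x (Suc j) \<and> y (Suc j) + g j < y j" if "j \<in> {1..<k}" for j
  proof -
    have "j \<in> {1..<1 + (k - 1)}" using that by auto
    then have "x j + (g j + 1) \<le> x (Suc j)" using x(2) by blast
    moreover have "x j + y j = s" "x (Suc j) + y (Suc j) = s"
      using on_antidiagonal[of j] on_antidiagonal[of "Suc j"] that by auto
    ultimately show ?thesis by linarith
  qed
  then show ?thesis using on_antidiagonal by blast
qed

lemma red_copy_nest_of_red_degrees: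
  assumes "1 \<le> k" "\<forall>i\<in>{1..2 * k - 1}. balanced (A i)"
    and "l = (\<Sum>i\<in>{1..2 * k - 1} - {k}. paren_ramsey (A i))" "1 \<le> m"
    and no_blue: "\<not> blue_triangle (2 * m + paren_ramsey (A k)) red"
    and degrees: "\<forall>x\<in>{1..m}. 2 * (k + l) <
      card {y \<in> {m + paren_ramsey (A k)<..m + paren_ramsey (A k) + m}. red x y}"
  shows "red_copy (length (nest A k (k - 1))) (paren_edge (nest A k (k - 1)))
    (2 * m + paren_ramsey (A k)) red"
proof -
  let ?B = "nest A k (k - 1)" and ?N = "2 * m + paren_ramsey (A k)"
    and ?R = "{m + paren_ramsey (A k)<..m + paren_ramsey (A k) + m}"
  have "k + (\<Sum>j\<in>{1..<k}. paren_ramsey (A j) + paren_ramsey (A (2 * k - j))) \<le> k + l"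
    using sum_mirror_pairs_le assms(3) by simp
  then obtain x y where
    edges: "\<forall>j\<in>{1..k}. x j \<in> {1..m} \<and> y j \<in> ?R \<and> red (x j) (y j)" and
    spacing: "\<forall>j\<in>{1..<k}. x j + (paren_ramsey (A j) + paren_ramsey (A (2 * k - j))) < x (Suc j) \<and>
      y (Suc j) + (paren_ramsey (A j) + paren_ramsey (A (2 * k - j))) < y j"
    using nested_red_edges_exist[OF assms(4) degrees] by blast
  have "red_copy_between (length ?B) (paren_edge ?B) (x (k - (k - 1))) (y (k - (k - 1))) red"
    using edges spacing assms(1)
    by (intro red_copy_between_nest[OF assms(2) no_blue, where c = m]) auto
  moreover have "x 1 \<in> {1..m}" "y 1 \<in> ?R"
    using edges assms(1) by auto
  moreover have "k - (k - 1) = 1" using assms(1) by simp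
  ultimately have "red_copy_between (length ?B) (paren_edge ?B) 1 ?N red"
    by (auto elim: red_copy_between_mono)
  then show ?thesis by (simp add: red_copy_iff_between)
qed

lemma ramsey_K3_property_nest:
  assumes "1 \<le> k" "\<forall>i\<in>{1..2 * k - 1}. balanced (A i)"
    and "l = (\<Sum>i\<in>{1..2 * k - 1} - {k}. paren_ramsey (A i))"
    and "m = length (nest A k (k - 1)) + 2 * (k + l)"
  shows "ramsey_K3_property (length (nest A k (k - 1))) (paren_edge (nest A k (k - 1)))
    (2 * m + paren_ramsey (A k))"
proof -
  let ?B = "nest A k (k - 1)" and ?N = "2 * m + paren_ramsey (A k)"
    and ?R = "{m + paren_ramsey (A k)<..m + paren_ramsey (A k) + m}"
  have "red_copy (length ?B) (paren_edge ?B) ?N red" if no_blue: "\<not> blue_triangle ?N red" for red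
  proof (cases "\<exists>x\<in>{1..m}. length ?B \<le> card {y \<in> ?R. \<not> red x y}")
    case True
    then obtain x where "x \<in> {1..m}" "length ?B \<le> card {y \<in> ?R. \<not> red x y}" by blast
    then show ?thesis by (intro red_copy_blue_neighbours[OF no_blue, of x]) auto
  next
    case False
    have "2 * (k + l) < card {y \<in> ?R. red x y}" if "x \<in> {1..m}" for x
    proof -
      have "card {y \<in> ?R. red x y} + card {y \<in> ?R. \<not> red x y} = m"
        using card_filter_add_card_filter_not[of ?R] by simp
      moreover have "card {y \<in> ?R. \<not> red x y} < length ?B" using False that by (meson not_le)
      ultimately show ?thesis using assms(4) by linarith
    qed
    moreover have "1 \<le> m" using assms(1,4) by simp
    ultimately show ?thesis using red_copy_nest_of_red_degrees[OF assms(1-3) _ no_blue] by blast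
  qed
  then show ?thesis unfolding ramsey_K3_property_def by blast
qed

theorem lemma2p4:
  fixes k :: nat and A :: "nat \<Rightarrow> bool list"
  assumes "k \<ge> 1"
    and "\<forall>i \<in> {1..2*k-1}. balanced (A i)"
  shows "paren_ramsey (nest A k (k - 1))
    \<le> paren_ramsey (A k)
       + 20 * (k + (\<Sum>i \<in> {1..2*k-1} - {k}. paren_ramsey (A i)) + length (A k))"
proof -
  define l where "l = (\<Sum>i\<in>{1..2 * k - 1} - {k}. paren_ramsey (A i))"
  define m where "m = length (nest A k (k - 1)) + 2 * (k + l)"
  have "paren_ramsey (nest A k (k - 1)) \<le> 2 * m + paren_ramsey (A k)"
    using ramsey_K3_property_nest[OF assms l_def m_def]
    unfolding paren_ramsey_def by (rule ord_ramsey_K3_le)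
  moreover have "(\<Sum>i\<in>{1..2 * k - 1} - {k}. length (A i)) \<le> l"
    unfolding l_def paren_ramsey_def by (intro sum_mono ord_ramsey_K3_ge)
  then have "length (nest A k (k - 1)) \<le> 2 * k + length (A k) + l"
    using length_nest_outermost[OF assms(1)] by simp
  ultimately show ?thesis by (simp add: m_def l_def)
qed

end
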